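(* Suppose Assumptions 1, 2 and 3 hold, let $k>0$, and consider the distributed dynamics $$\dot{\lambda}_i=d_i-\hat{x}_i(\lambda_i)+\phi_i\big(\hat{x}_i(\lambda_i)\big)+k\sum_{j\in\mathcal{N}_i}(\lambda_j-\lambda_i),\qquad i=1,\dots,N,$$ from an arbitrary initial condition in $\mathbb{R}^N$. (a) If $\sum_{i=1}^N\big(d_i-\bar{x}_i+\phi_i(\bar{x}_i)\big)>0$, then for every $i$, $\lambda_i(t)\to+\infty$ and $\lim_{t\to\infty}\dot{\lambda}_i(t)=D_0$, where $D_0=\frac1N\sum_{i=1}^N\big(d_i-\bar{x}_i+\phi_i(\bar{x}_i)\big)>0$. (b) If $\sum_{i=1}^N\big(d_i-\underline{x}_i+\phi_i(\underline{x}_i)\big)<0$, then for every $i$, $\lambda_i(t)\to-\infty$ and $\lim_{t\to\infty}\dot{\lambda}_i(t)=D_1$, where $D_1=\frac1N\sum_{i=1}^N\big(d_i-\underline{x}_i+\phi_i(\underline{x}_i)\big)<0$.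
   Context: For $i=1,\dots,N$: $d_i\in\mathbb{R}$, $\mathcal{X}_i=[\underline{x}_i,\bar{x}_i]$ a nonempty closed interval, $f_i,\phi_i:\mathbb{R}\to\mathbb{R}$. Assumption 1: for each $i$, $f_i$ and $\phi_i$ are continuously differentiable, $f_i$ is strictly convex on $\mathcal{X}_i$, $\phi_i$ is convex on $\mathcal{X}_i$, and $\phi_i'(x_i)<1$ for all $x_i\in\mathcal{X}_i$. Assumption 2: $f_i'(x_i)>0$ for all $x_i\in\mathcal{X}_i$ and all $i$. Assumption 3: the communication graph $\mathcal{G}=(\{1,\dots,N\},\mathcal{E})$ is undirected and connected; $\mathcal{N}_i=\{j:(j,i)\in\mathcal{E}\}$. Let $v_i(x_i)=f_i'(x_i)(1-\phi_i'(x_i))^{-1}$ on $\mathcal{X}_i$ (strictly increasing). Define for $\lambda\in\mathbb{R}$: $\hat{x}_i(\lambda)=\underline{x}_i$ if $\lambda\le v_i(\underline{x}_i)$; $\hat{x}_i(\lambda)=v_i^{-1}(\lambda)$ if $v_i(\underline{x}_i)<\lambda<v_i(\bar{x}_i)$; $\hat{x}_i(\lambda)=\bar{x}_i$ if $\lambda\ge v_i(\bar{x}_i)$. *)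

theory Defs
  imports "HOL-Analysis.Analysis"
begin

definition strict_convex_on_real :: "real set \<Rightarrow> (real \<Rightarrow> real) \<Rightarrow> bool" where
  "strict_convex_on_real S f \<longleftrightarrow>
     (\<forall>x\<in>S. \<forall>y\<in>S. \<forall>t. x \<noteq> y \<and> 0 < t \<and> t < 1 \<longrightarrow>
        f (t * x + (1 - t) * y) < t * f x + (1 - t) * f y)"

definition xhat :: "real \<Rightarrow> real \<Rightarrow> (real \<Rightarrow> real) \<Rightarrow> real \<Rightarrow> real" where
  "xhat lo hi v lam =
     (if lam \<le> v lo then lo
      else if v hi \<le> lam then hi
      else (THE x. lo \<le> x \<and> x \<le> hi \<and> v x = lam))"

end

theory Submission
  imports Defs
begin

text \<open>
  The forcing term \<open>w\<^sub>i = d\<^sub>i - x\<^sub>i + \<phi>\<^sub>i(x\<^sub>i)\<close> with \<open>x\<^sub>i = xhat\<^sub>i(\<lambda>\<^sub>i)\<close> lies between its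
  saturated values \<open>a\<^sub>i\<close> (at \<open>x\<^sub>i = hi\<^sub>i\<close>) and \<open>b\<^sub>i\<close> (at \<open>x\<^sub>i = lo\<^sub>i\<close>), since \<open>x - \<phi>\<^sub>i(x)\<close> is
  nondecreasing, and it equals \<open>a\<^sub>i\<close> as soon as \<open>\<lambda>\<^sub>i \<ge> v\<^sub>i(hi\<^sub>i)\<close>, since \<open>v\<^sub>i\<close> is strictly
  increasing. The Laplacian coupling conserves \<open>\<Sum>\<lambda>\<^sub>i\<close> and, by a Poincare inequality on the
  connected graph, dissipates the deviation from the mean; against a bounded forcing this keeps the
  deviations bounded. In case (a) the mean grows at least at rate \<open>\<Sum>a\<^sub>i / N > 0\<close>, so every
  \<open>\<lambda>\<^sub>i\<close> diverges and all agents eventually saturate. From then on the velocities obey the pure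
  consensus flow with conserved sum \<open>\<Sum>a\<^sub>i\<close>, hence converge exponentially to \<open>\<Sum>a\<^sub>i / N\<close>.
  Case (b) is case (a) for \<open>-\<lambda>\<close>.
\<close>

section \<open>Graph Laplacian and Poincare inequality\<close>

text \<open>\<open>laplacian N E x i\<close> is \<open>-(L x)\<^sub>i\<close> for the graph Laplacian \<open>L\<close>, i.e. the coupling term of the dynamics.\<close>

definition laplacian :: "nat \<Rightarrow> (nat \<Rightarrow> nat \<Rightarrow> bool) \<Rightarrow> (nat \<Rightarrow> real) \<Rightarrow> nat \<Rightarrow> real" where
  "laplacian N E x i = (\<Sum>j\<in>{j. j < N \<and> E j i}. x j - x i)"

text \<open>Every edge is counted in both directions, whence the factor \<open>1/2\<close> in \<open>sum_mult_laplacian\<close>.\<close>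

definition dirichlet_energy :: "nat \<Rightarrow> (nat \<Rightarrow> nat \<Rightarrow> bool) \<Rightarrow> (nat \<Rightarrow> real) \<Rightarrow> real" where
  "dirichlet_energy N E x = (\<Sum>i<N. \<Sum>j\<in>{j. j < N \<and> E j i}. (x j - x i)^2)"

definition deviation :: "nat \<Rightarrow> (nat \<Rightarrow> real) \<Rightarrow> nat \<Rightarrow> real" where
  "deviation N x i = x i - (\<Sum>j<N. x j) / real N"

lemma sum_neighbours_swap:
  fixes N :: nat
  assumes sym: "symp E"
  shows "(\<Sum>i<N. \<Sum>j\<in>{j. j < N \<and> E j i}. h i j) = (\<Sum>i<N. \<Sum>j\<in>{j. j < N \<and> E j i}. h j i)"
proof -
  have neighbours: "(\<Sum>j\<in>{j. j < N \<and> E j i}. F j) = (\<Sum>j<N. if E j i then F j else 0)"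
    for i and F :: "nat \<Rightarrow> 'b::comm_monoid_add"
    by (simp add: sum.inter_filter[symmetric] lessThan_def conj_commute)
  have "E j i = E i j" for i j
    using sym by (blast dest: sympD)
  then show ?thesis
    unfolding neighbours by (subst sum.swap) simp
qed

lemma sum_laplacian_eq_0:
  assumes "symp E"
  shows "(\<Sum>i<N. laplacian N E x i) = 0"
proof -
  let ?S = "\<Sum>i<N. \<Sum>j\<in>{j. j < N \<and> E j i}. x j - x i"
  have "?S = (\<Sum>i<N. \<Sum>j\<in>{j. j < N \<and> E j i}. x i - x j)"
    by (rule sum_neighbours_swap[OF assms])
  also have "\<dots> = - ?S"
    by (simp add: sum_negf[symmetric])
  finally show ?thesis
    unfolding laplacian_def by simp
qed

lemma sum_mult_laplacian:
  assumes "symp E"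
  shows "(\<Sum>i<N. x i * laplacian N E x i) = - dirichlet_energy N E x / 2"
proof -
  let ?S = "\<Sum>i<N. \<Sum>j\<in>{j. j < N \<and> E j i}. x i * (x j - x i)"
  have "?S = (\<Sum>i<N. \<Sum>j\<in>{j. j < N \<and> E j i}. x j * (x i - x j))"
    by (rule sum_neighbours_swap[OF assms])
  then have "?S + ?S = (\<Sum>i<N. \<Sum>j\<in>{j. j < N \<and> E j i}. x i * (x j - x i) + x j * (x i - x j))"
    by (simp add: sum.distrib)
  also have "\<dots> = - dirichlet_energy N E x"
    unfolding dirichlet_energy_def by (simp add: sum_negf[symmetric] power2_eq_square algebra_simps)
  moreover have "(\<Sum>i<N. x i * laplacian N E x i) = ?S"
    unfolding laplacian_def by (simp add: sum_distrib_left)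
  ultimately show ?thesis
    by linarith
qed

lemma laplacian_diff_const: "laplacian N E (\<lambda>j. x j - c) = laplacian N E x"
  unfolding laplacian_def by simp

lemma laplacian_uminus: "laplacian N E (\<lambda>j. - x j) i = - laplacian N E x i"
  unfolding laplacian_def by (simp add: sum_negf[symmetric])

lemma laplacian_deviation: "laplacian N E (deviation N x) = laplacian N E x"
  unfolding deviation_def by (rule laplacian_diff_const)

lemma sum_deviation_eq_0: "(\<Sum>i<N. deviation N x i) = 0"
  unfolding deviation_def by (cases "N = 0") (simp_all add: sum_subtractf)

lemma dirichlet_energy_nonneg: "dirichlet_energy N E x \<ge> 0"
  unfolding dirichlet_energy_def by (intro sum_nonneg) auto

lemma edge_diff_sq_le_dirichlet_energy:
  assumes "j < N" "l < N" "E j l"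
  shows "(x j - x l)^2 \<le> dirichlet_energy N E x"
proof -
  let ?e = "\<lambda>l. \<Sum>j\<in>{j. j < N \<and> E j l}. (x j - x l)^2"
  have "(x j - x l)^2 \<le> ?e l"
    using assms by (intro member_le_sum) auto
  also have "\<dots> \<le> (\<Sum>l<N. ?e l)"
    using assms by (intro member_le_sum[where f = ?e] sum_nonneg) auto
  finally show ?thesis
    unfolding dirichlet_energy_def .
qed

lemma reachable_diff_sq_le_dirichlet_energy:
  assumes "(\<lambda>a b. a < N \<and> b < N \<and> E a b)\<^sup>*\<^sup>* i j"
  shows "\<exists>c\<ge>0. \<forall>x. (x i - x j)^2 \<le> c * dirichlet_energy N E x"
  using assms
proof (induction rule: rtranclp_induct)
  case base
  show ?case by auto
next
  case (step j l)
  then obtain c where c: "c \<ge> 0" "\<And>x. (x i - x j)^2 \<le> c * dirichlet_energy N E x"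
    by auto
  have "(x i - x l)^2 \<le> (2 * c + 2) * dirichlet_energy N E x" for x
  proof -
    have "0 \<le> ((x i - x j) - (x j - x l))^2"
      by simp
    then have "(x i - x l)^2 \<le> 2 * (x i - x j)^2 + 2 * (x j - x l)^2"
      by (simp add: power2_eq_square algebra_simps)
    also have "\<dots> \<le> 2 * (c * dirichlet_energy N E x) + 2 * dirichlet_energy N E x"
      using c(2) edge_diff_sq_le_dirichlet_energy[of j N l E x] step(2) by (intro add_mono) auto
    finally show ?thesis
      by (simp add: algebra_simps)
  qed
  then show ?case
    using c(1) by (intro exI[of _ "2 * c + 2"]) auto
qed

lemma connected_diff_sq_le_dirichlet_energy:
  assumes "\<And>i j. i < N \<Longrightarrow> j < N \<Longrightarrow> (\<lambda>a b. a < N \<and> b < N \<and> E a b)\<^sup>*\<^sup>* i j"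
  obtains C where "C > 0"
    "\<And>x i j. i < N \<Longrightarrow> j < N \<Longrightarrow> (x i - x j)^2 \<le> C * dirichlet_energy N E x"
proof -
  let ?P = "{..<N} \<times> {..<N}"
  have "\<forall>p\<in>?P. \<exists>c\<ge>0. \<forall>x. (x (fst p) - x (snd p))^2 \<le> c * dirichlet_energy N E x"
    using reachable_diff_sq_le_dirichlet_energy assms by auto
  then obtain c where c: "\<And>p. p \<in> ?P \<Longrightarrow> c p \<ge> 0"
    "\<And>p x. p \<in> ?P \<Longrightarrow> (x (fst p) - x (snd p))^2 \<le> c p * dirichlet_energy N E x"
    by metis
  define C where "C = 1 + (\<Sum>p\<in>?P. c p)"
  have c_le: "c p \<le> C" if "p \<in> ?P" for p
  proof -
    have "c p \<le> (\<Sum>p\<in>?P. c p)"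
      by (rule member_le_sum) (use c(1) that in auto)
    then show ?thesis
      unfolding C_def by linarith
  qed
  have "(x i - x j)^2 \<le> C * dirichlet_energy N E x" if "i < N" "j < N" for x i j
  proof -
    have "(x i - x j)^2 \<le> c (i, j) * dirichlet_energy N E x"
      using c(2)[of "(i, j)" x] that by simp
    also have "\<dots> \<le> C * dirichlet_energy N E x"
      using c_le[of "(i, j)"] that
      by (intro mult_right_mono dirichlet_energy_nonneg) auto
    finally show ?thesis .
  qed
  moreover have "C > 0"
    unfolding C_def using c(1) by (simp add: add_pos_nonneg sum_nonneg)
  ultimately show ?thesis
    using that by blast
qed

lemma mean_zero_poincare:
  assumes "\<And>i j. i < N \<Longrightarrow> j < N \<Longrightarrow> (\<lambda>a b. a < N \<and> b < N \<and> E a b)\<^sup>*\<^sup>* i j"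
  obtains K where "K > 0"
    "\<And>y. (\<Sum>i<N. y i) = 0 \<Longrightarrow> (\<Sum>i<N. (y i)^2) \<le> K * dirichlet_energy N E y"
proof -
  obtain C where C: "C > 0"
    "\<And>x i j. i < N \<Longrightarrow> j < N \<Longrightarrow> (x i - x j)^2 \<le> C * dirichlet_energy N E x"
    using connected_diff_sq_le_dirichlet_energy[OF assms] by blast
  have "(\<Sum>i<N. (y i)^2) \<le> (real N * C + 1) * dirichlet_energy N E y"
    if "(\<Sum>i<N. y i) = 0" for y
  proof -
    have "(\<Sum>i<N. \<Sum>j<N. (y i - y j)^2) = 2 * real N * (\<Sum>i<N. (y i)^2) - 2 * (\<Sum>i<N. y i)^2"
      by (simp add: power2_eq_square algebra_simps sum.distrib sum_subtractf
          sum_distrib_left sum_distrib_right sum_product)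
    then have "2 * real N * (\<Sum>i<N. (y i)^2) = (\<Sum>i<N. \<Sum>j<N. (y i - y j)^2)"
      using that by simp
    also have "\<dots> \<le> (\<Sum>i<N. \<Sum>j<N. C * dirichlet_energy N E y)"
      using C(2) by (intro sum_mono) auto
    also have "\<dots> = real N * (real N * C * dirichlet_energy N E y)"
      by simp
    finally have "2 * (\<Sum>i<N. (y i)^2) \<le> real N * C * dirichlet_energy N E y \<or> N = 0"
      by (auto simp: mult.assoc)
    then show ?thesis
      using C(1) dirichlet_energy_nonneg[of N E y] sum_nonneg[of "{..<N}" "\<lambda>i. (y i)^2"]
      by (auto simp: algebra_simps)
  qed
  moreover have "real N * C + 1 > 0"
    using C(1) by (intro add_nonneg_pos) auto
  ultimately show ?thesis
    using that by blast
qed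

section \<open>Differential inequalities\<close>

lemma two_mult_le_weighted_squares:
  fixes a b \<epsilon> :: real
  assumes "\<epsilon> > 0"
  shows "2 * a * b \<le> \<epsilon> * a^2 + b^2 / \<epsilon>"
proof -
  have "\<epsilon> * (\<epsilon> * a^2 + b^2 / \<epsilon> - 2 * a * b) = (\<epsilon> * a - b)^2"
    using assms by (simp add: power2_eq_square field_simps)
  then have "0 \<le> \<epsilon> * (\<epsilon> * a^2 + b^2 / \<epsilon> - 2 * a * b)"
    by simp
  then show ?thesis
    using assms by (simp add: zero_le_mult_iff)
qed

lemma at_within_atLeast:
  fixes a x :: "'a::linorder_topology"
  assumes "a < x"
  shows "at x within {a..} = at x"
  using assms by (intro at_within_open_subset[where S = "{a<..}"]) auto

lemma le_max_if_deriv_neg_above: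
  fixes V V' :: "real \<Rightarrow> real"
  assumes cont: "continuous_on {0..} V"
    and deriv: "\<And>t. t > 0 \<Longrightarrow> (V has_real_derivative V' t) (at t)"
    and neg: "\<And>t. t > 0 \<Longrightarrow> V t > R \<Longrightarrow> V' t < 0"
    and "t \<ge> 0"
  shows "V t \<le> max R (V 0)"
proof (rule ccontr)
  define M where "M = max R (V 0)"
  assume "\<not> V t \<le> max R (V 0)"
  then have big: "V t > M"
    unfolding M_def by linarith
  define A where "A = {0..t} \<inter> V -` {..M}"
  have "closed A"
    unfolding A_def using cont by (intro continuous_closed_preimage) (auto intro: continuous_on_subset)
  moreover have "0 \<in> A"
    unfolding A_def M_def using \<open>t \<ge> 0\<close> by auto
  moreover have bdd: "bdd_above A"
    unfolding A_def by (rule bdd_aboveI[of _ t]) auto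
  ultimately have "Sup A \<in> A"
    by (intro closed_contains_Sup) auto
  define s where "s = Sup A"
  have "s \<in> A"
    unfolding s_def by fact
  have upper: "x \<le> s" if "x \<in> A" for x
    unfolding s_def using bdd that by (rule cSup_upper[rotated])
  have "0 \<le> s" "V s \<le> M" "s < t"
    using \<open>s \<in> A\<close> big unfolding A_def by (auto simp: less_le)
  have above: "V x > M" if "s < x" "x \<le> t" for x
  proof (rule ccontr)
    assume "\<not> M < V x"
    then have "x \<in> A"
      unfolding A_def using that \<open>0 \<le> s\<close> by auto
    then show False
      using upper that by fastforce
  qed
  \<comment> \<open>On \<open>(s, t)\<close> the function stays above \<open>R\<close>, so it decreases there.\<close>
  have "V s > V t"
  proof (rule DERIV_neg_imp_decreasing_open[OF \<open>s < t\<close>])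
    fix x assume "s < x" "x < t"
    then have "x > 0" "V x > R"
      using above[of x] \<open>0 \<le> s\<close> unfolding M_def by auto
    then show "\<exists>y. DERIV V x :> y \<and> y < 0"
      using deriv neg by blast
  next
    show "continuous_on {s..t} V"
      using \<open>0 \<le> s\<close> by (intro continuous_on_subset[OF cont]) auto
  qed
  then show False
    using \<open>V s \<le> M\<close> big by simp
qed

lemma tendsto_zero_if_deriv_le_neg_mult:
  fixes W W' :: "real \<Rightarrow> real"
  assumes "a > 0"
    and deriv: "\<And>t. t > T \<Longrightarrow> (W has_real_derivative W' t) (at t)"
    and decay: "\<And>t. t > T \<Longrightarrow> W' t \<le> - a * W t"
    and nonneg: "\<And>t. t > T \<Longrightarrow> W t \<ge> 0"
  shows "(W \<longlongrightarrow> 0) at_top"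
proof -
  define G where "G t = W t * exp (a * t)" for t
  have G_le: "G t \<le> G (T + 1)" if "t \<ge> T + 1" for t
  proof (rule DERIV_nonpos_imp_nonincreasing[OF that])
    fix x assume "T + 1 \<le> x"
    then have "x > T"
      by simp
    have "(G has_real_derivative (W' x + a * W x) * exp (a * x)) (at x)"
      unfolding G_def using deriv[OF \<open>x > T\<close>]
      by (auto intro!: derivative_eq_intros simp: algebra_simps)
    moreover have "(W' x + a * W x) * exp (a * x) \<le> 0"
      using decay[OF \<open>x > T\<close>] by (simp add: mult_nonpos_nonneg)
    ultimately show "\<exists>y. (G has_real_derivative y) (at x) \<and> y \<le> 0"
      by blast
  qed
  then have bound: "W t \<le> G (T + 1) * exp (- a * t)" if "t \<ge> T + 1" for t
  proof -
    have "W t = G t * exp (- a * t)"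
      unfolding G_def by (simp add: mult.assoc flip: exp_add)
    then show ?thesis
      using G_le[OF that] by (simp add: mult_right_mono)
  qed
  have "LIM t at_top. - a * t :> at_bot"
    using \<open>a > 0\<close> by (intro filterlim_tendsto_neg_mult_at_bot[OF tendsto_const] filterlim_ident) auto
  then have lim: "((\<lambda>t. G (T + 1) * exp (- a * t)) \<longlongrightarrow> 0) at_top"
    by (intro tendsto_mult_right_zero filterlim_compose[OF exp_at_bot])
  show ?thesis
  proof (rule tendsto_sandwich[OF _ _ tendsto_const lim])
    show "\<forall>\<^sub>F t in at_top. 0 \<le> W t"
      using nonneg by (intro eventually_at_top_linorderI[of "T + 1"]) auto
    show "\<forall>\<^sub>F t in at_top. W t \<le> G (T + 1) * exp (- a * t)"
      using bound by (intro eventually_at_top_linorderI[of "T + 1"]) auto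
  qed
qed

section \<open>Forced consensus dynamics\<close>

lemma consensus_sum_has_derivative:
  fixes lam :: "real \<Rightarrow> nat \<Rightarrow> real"
  assumes sym: "symp E"
    and ode: "\<And>i. i < N \<Longrightarrow>
      ((\<lambda>s. lam s i) has_real_derivative w i + k * laplacian N E (lam t) i) (at t within S)"
  shows "((\<lambda>s. \<Sum>i<N. lam s i) has_real_derivative (\<Sum>i<N. w i)) (at t within S)"
proof -
  have "((\<lambda>s. \<Sum>i<N. lam s i) has_real_derivative
      (\<Sum>i<N. w i + k * laplacian N E (lam t) i)) (at t within S)"
    by (rule DERIV_sum) (use ode in auto)
  then show ?thesis
    by (simp add: sum.distrib sum_laplacian_eq_0[OF sym] flip: sum_distrib_left)
qed

lemma deviation_energy_has_derivative:
  fixes lam :: "real \<Rightarrow> nat \<Rightarrow> real"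
  assumes sym: "symp E"
    and ode: "\<And>i. i < N \<Longrightarrow>
      ((\<lambda>s. lam s i) has_real_derivative w i + k * laplacian N E (lam t) i) (at t within S)"
  shows "((\<lambda>s. \<Sum>i<N. (deviation N (lam s) i)^2) has_real_derivative
      2 * (\<Sum>i<N. deviation N (lam t) i * w i) - k * dirichlet_energy N E (deviation N (lam t)))
      (at t within S)"
proof -
  define e where "e = deviation N (lam t)"
  define m where "m = (\<Sum>i<N. w i) / real N"
  have dev: "((\<lambda>s. deviation N (lam s) i) has_real_derivative w i + k * laplacian N E e i - m)
      (at t within S)" if "i < N" for i
    unfolding deviation_def e_def laplacian_deviation m_def
    by (intro DERIV_diff DERIV_cdivide ode[OF that] consensus_sum_has_derivative[OF sym ode])
  then have "((\<lambda>s. (deviation N (lam s) i)^2) has_real_derivative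
      2 * e i * (w i + k * laplacian N E e i - m)) (at t within S)" if "i < N" for i
    using DERIV_power[OF dev[OF that], of 2] unfolding e_def by (simp add: algebra_simps)
  then have "((\<lambda>s. \<Sum>i<N. (deviation N (lam s) i)^2) has_real_derivative
      (\<Sum>i<N. 2 * e i * (w i + k * laplacian N E e i - m))) (at t within S)"
    by (intro DERIV_sum) auto
  moreover have "(\<Sum>i<N. 2 * e i * (w i + k * laplacian N E e i - m)) =
      2 * (\<Sum>i<N. e i * w i) + 2 * k * (\<Sum>i<N. e i * laplacian N E e i) - 2 * m * (\<Sum>i<N. e i)"
    by (simp add: algebra_simps sum.distrib sum_subtractf sum_distrib_left)
  ultimately show ?thesis
    unfolding e_def by (simp add: sum_mult_laplacian[OF sym] sum_deviation_eq_0)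
qed

text \<open>Young's inequality lets the dissipation \<open>k Q(e) \<ge> (k / K) |e|\<^sup>2\<close> absorb a bounded forcing.\<close>

lemma forcing_minus_dissipation_le:
  fixes e w :: "nat \<Rightarrow> real"
  assumes "K > 0" "k > 0"
    and poincare: "(\<Sum>i<N. (e i)^2) \<le> K * dirichlet_energy N E e"
    and bounded: "\<And>i. i < N \<Longrightarrow> \<bar>w i\<bar> \<le> B"
  shows "2 * (\<Sum>i<N. e i * w i) - k * dirichlet_energy N E e
    \<le> - (k / (2 * K)) * (\<Sum>i<N. (e i)^2) + real N * B^2 / (k / (2 * K))"
proof -
  define \<epsilon> where "\<epsilon> = k / (2 * K)"
  have "\<epsilon> > 0"
    unfolding \<epsilon>_def using assms by simp
  have "2 * (e i * w i) \<le> \<epsilon> * (e i)^2 + B^2 / \<epsilon>" if "i < N" for i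
  proof -
    have "(w i)^2 \<le> B^2"
      using bounded[OF that] by (simp add: abs_le_square_iff[symmetric])
    then have "(w i)^2 / \<epsilon> \<le> B^2 / \<epsilon>"
      using \<open>\<epsilon> > 0\<close> by (intro divide_right_mono) auto
    then show ?thesis
      using two_mult_le_weighted_squares[OF \<open>\<epsilon> > 0\<close>, of "e i" "w i"] by linarith
  qed
  then have "2 * (\<Sum>i<N. e i * w i) \<le> (\<Sum>i<N. \<epsilon> * (e i)^2 + B^2 / \<epsilon>)"
    unfolding sum_distrib_left by (intro sum_mono) auto
  also have "\<dots> = \<epsilon> * (\<Sum>i<N. (e i)^2) + real N * B^2 / \<epsilon>"
    by (simp add: sum.distrib sum_distrib_left)
  finally have "2 * (\<Sum>i<N. e i * w i) \<le> \<epsilon> * (\<Sum>i<N. (e i)^2) + real N * B^2 / \<epsilon>" .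
  moreover have "2 * \<epsilon> * (\<Sum>i<N. (e i)^2) \<le> 2 * \<epsilon> * (K * dirichlet_energy N E e)"
    using poincare \<open>\<epsilon> > 0\<close> by (intro mult_left_mono) auto
  moreover have "2 * \<epsilon> * (K * dirichlet_energy N E e) = k * dirichlet_energy N E e"
    unfolding \<epsilon>_def using \<open>K > 0\<close> by simp
  ultimately show ?thesis
    unfolding \<epsilon>_def[symmetric] by linarith
qed

lemma deviation_bounded:
  fixes lam w :: "real \<Rightarrow> nat \<Rightarrow> real"
  assumes sym: "symp E"
    and conn: "\<And>i j. i < N \<Longrightarrow> j < N \<Longrightarrow> (\<lambda>a b. a < N \<and> b < N \<and> E a b)\<^sup>*\<^sup>* i j"
    and "k > 0"
    and ode: "\<And>i t. i < N \<Longrightarrow> t \<ge> 0 \<Longrightarrow>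
      ((\<lambda>s. lam s i) has_real_derivative w t i + k * laplacian N E (lam t) i) (at t within {0..})"
    and bounded: "\<And>i t. i < N \<Longrightarrow> t \<ge> 0 \<Longrightarrow> \<bar>w t i\<bar> \<le> B"
  obtains M where "\<And>i t. i < N \<Longrightarrow> t \<ge> 0 \<Longrightarrow> \<bar>deviation N (lam t) i\<bar> \<le> M"
proof -
  obtain K where "K > 0" and poincare:
    "\<And>y. (\<Sum>i<N. y i) = 0 \<Longrightarrow> (\<Sum>i<N. (y i)^2) \<le> K * dirichlet_energy N E y"
    using mean_zero_poincare[OF conn] by blast
  define \<epsilon> where "\<epsilon> = k / (2 * K)"
  define V where "V s = (\<Sum>i<N. (deviation N (lam s) i)^2)" for s
  define V' where "V' t = 2 * (\<Sum>i<N. deviation N (lam t) i * w t i)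
    - k * dirichlet_energy N E (deviation N (lam t))" for t
  have deriv: "(V has_real_derivative V' t) (at t within {0..})" if "t \<ge> 0" for t
    unfolding V_def V'_def using ode that by (intro deviation_energy_has_derivative[OF sym]) auto
  have "V' t < 0" if "t > 0" "V t > real N * B^2 / \<epsilon>^2" for t
  proof -
    have "\<epsilon> > 0"
      unfolding \<epsilon>_def using \<open>k > 0\<close> \<open>K > 0\<close> by simp
    then have "real N * B^2 / \<epsilon> < \<epsilon> * V t"
      using that(2) by (simp add: field_simps power2_eq_square)
    moreover have "V' t \<le> - \<epsilon> * V t + real N * B^2 / \<epsilon>"
      unfolding V_def V'_def \<epsilon>_def using \<open>K > 0\<close> \<open>k > 0\<close> bounded that(1)
      by (intro forcing_minus_dissipation_le poincare sum_deviation_eq_0) auto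
    ultimately show ?thesis
      by linarith
  qed
  moreover have "continuous_on {0..} V"
    using deriv by (intro DERIV_continuous_on) auto
  moreover have "(V has_real_derivative V' t) (at t)" if "t > 0" for t
    using deriv[of t] that by (simp add: at_within_atLeast)
  ultimately have V_le: "V t \<le> max (real N * B^2 / \<epsilon>^2) (V 0)" if "t \<ge> 0" for t
    using that by (intro le_max_if_deriv_neg_above) auto
  have "\<bar>deviation N (lam t) i\<bar> \<le> sqrt (max (real N * B^2 / \<epsilon>^2) (V 0))"
    if "i < N" "t \<ge> 0" for i t
  proof -
    have "(deviation N (lam t) i)^2 \<le> V t"
      unfolding V_def using that by (intro member_le_sum) auto
    then show ?thesis
      using V_le[OF that(2)] by (metis order_trans real_sqrt_abs real_sqrt_le_mono)
  qed
  then show ?thesis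
    using that by blast
qed

lemma ge_linear_if_deriv_ge:
  fixes S S' :: "real \<Rightarrow> real"
  assumes deriv: "\<And>t. t \<ge> 0 \<Longrightarrow> (S has_real_derivative S' t) (at t within {0..})"
    and ge: "\<And>t. t \<ge> 0 \<Longrightarrow> S' t \<ge> c"
    and "t \<ge> 0"
  shows "S t \<ge> S 0 + c * t"
proof -
  have "S 0 - c * 0 \<le> S t - c * t"
  proof (rule DERIV_nonneg_imp_increasing_open[OF \<open>t \<ge> 0\<close>])
    fix x :: real assume "0 < x" "x < t"
    then have "(S has_real_derivative S' x) (at x)"
      using deriv[of x] by (simp add: at_within_atLeast)
    then have "((\<lambda>s. S s - c * s) has_real_derivative S' x - c * 1) (at x)"
      by (intro DERIV_diff DERIV_cmult DERIV_ident)
    then show "\<exists>y. ((\<lambda>s. S s - c * s) has_real_derivative y) (at x) \<and> 0 \<le> y"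
      using ge[of x] \<open>0 < x\<close> by (intro exI[of _ "S' x - c * 1"]) auto
  next
    have "continuous_on {0..} S"
      by (rule DERIV_continuous_on[OF deriv]) simp
    then have "continuous_on {0..t} S"
      by (rule continuous_on_subset) auto
    then show "continuous_on {0..t} (\<lambda>s. S s - c * s)"
      by (intro continuous_on_diff continuous_on_mult continuous_on_const continuous_on_id)
  qed
  then show ?thesis
    by simp
qed

lemma laplacian_flow_tendsto_zero:
  fixes z :: "real \<Rightarrow> nat \<Rightarrow> real"
  assumes sym: "symp E"
    and conn: "\<And>i j. i < N \<Longrightarrow> j < N \<Longrightarrow> (\<lambda>a b. a < N \<and> b < N \<and> E a b)\<^sup>*\<^sup>* i j"
    and "k > 0"
    and flow: "\<And>i t. i < N \<Longrightarrow> t > T \<Longrightarrow>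
      ((\<lambda>s. z s i) has_real_derivative k * laplacian N E (z t) i) (at t)"
    and zero_sum: "\<And>t. t > T \<Longrightarrow> (\<Sum>i<N. z t i) = 0"
    and "i < N"
  shows "((\<lambda>t. z t i) \<longlongrightarrow> 0) at_top"
proof -
  obtain K where "K > 0" and poincare:
    "\<And>y. (\<Sum>i<N. y i) = 0 \<Longrightarrow> (\<Sum>i<N. (y i)^2) \<le> K * dirichlet_energy N E y"
    using mean_zero_poincare[OF conn] by blast
  define W where "W t = (\<Sum>i<N. (z t i)^2)" for t
  have deriv: "(W has_real_derivative - k * dirichlet_energy N E (z t)) (at t)" if "t > T" for t
  proof -
    have "(W has_real_derivative (\<Sum>i<N. 2 * k * (z t i * laplacian N E (z t) i))) (at t)"
      unfolding W_def
      by (intro DERIV_sum) (use DERIV_power[OF flow[OF _ that], of _ 2] in \<open>auto simp: algebra_simps\<close>)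
    then show ?thesis
      by (simp add: sum_mult_laplacian[OF sym] flip: sum_distrib_left)
  qed
  have decay: "- k * dirichlet_energy N E (z t) \<le> - (k / K) * W t" if "t > T" for t
  proof -
    have "(k / K) * W t \<le> (k / K) * (K * dirichlet_energy N E (z t))"
      unfolding W_def using poincare[OF zero_sum[OF that]] \<open>k > 0\<close> \<open>K > 0\<close>
      by (intro mult_left_mono) auto
    then show ?thesis
      using \<open>K > 0\<close> by simp
  qed
  have "W t \<ge> 0" for t
    unfolding W_def by (intro sum_nonneg) auto
  then have W_lim: "(W \<longlongrightarrow> 0) at_top"
    using \<open>k > 0\<close> \<open>K > 0\<close> by (intro tendsto_zero_if_deriv_le_neg_mult[OF _ deriv decay]) auto
  have "(z t i)^2 \<le> W t" for t
    unfolding W_def using \<open>i < N\<close> by (intro member_le_sum) auto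
  then have "((\<lambda>t. (z t i)^2) \<longlongrightarrow> 0) at_top"
    by (intro tendsto_sandwich[OF _ _ tendsto_const W_lim] always_eventually) auto
  then have "((\<lambda>t. sqrt ((z t i)^2)) \<longlongrightarrow> 0) at_top"
    using tendsto_real_sqrt by fastforce
  then show ?thesis
    by (simp add: tendsto_rabs_zero_iff)
qed

lemma forced_consensus_diverges:
  fixes lam w :: "real \<Rightarrow> nat \<Rightarrow> real" and a b :: "nat \<Rightarrow> real"
  assumes sym: "symp E"
    and conn: "\<And>i j. i < N \<Longrightarrow> j < N \<Longrightarrow> (\<lambda>a b. a < N \<and> b < N \<and> E a b)\<^sup>*\<^sup>* i j"
    and "k > 0"
    and ode: "\<And>i t. i < N \<Longrightarrow> t \<ge> 0 \<Longrightarrow>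
      ((\<lambda>s. lam s i) has_real_derivative w t i + k * laplacian N E (lam t) i) (at t within {0..})"
    and range: "\<And>i t. i < N \<Longrightarrow> t \<ge> 0 \<Longrightarrow> a i \<le> w t i \<and> w t i \<le> b i"
    and pos: "(\<Sum>i<N. a i) > 0"
    and "i < N"
  shows "filterlim (\<lambda>t. lam t i) at_top at_top"
proof -
  define D where "D = (\<Sum>i<N. a i) / real N"
  have "N > 0"
    using pos by (cases N) auto
  then have "D > 0"
    unfolding D_def using pos by simp
  have bounded: "\<bar>w t i\<bar> \<le> (\<Sum>i<N. \<bar>a i\<bar> + \<bar>b i\<bar>)" if "i < N" "t \<ge> 0" for i t
  proof -
    have "\<bar>w t i\<bar> \<le> \<bar>a i\<bar> + \<bar>b i\<bar>"
      using range[OF that] by linarith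
    also have "\<dots> \<le> (\<Sum>i<N. \<bar>a i\<bar> + \<bar>b i\<bar>)"
      using that by (intro member_le_sum) auto
    finally show ?thesis .
  qed
  obtain M where M: "\<And>i t. i < N \<Longrightarrow> t \<ge> 0 \<Longrightarrow> \<bar>deviation N (lam t) i\<bar> \<le> M"
    using deviation_bounded[OF sym conn \<open>k > 0\<close> ode bounded] by blast
  have "((\<lambda>s. \<Sum>j<N. lam s j) has_real_derivative (\<Sum>j<N. w t j)) (at t within {0..})"
    if "t \<ge> 0" for t
    using ode[OF _ that] by (rule consensus_sum_has_derivative[OF sym, where w = "w t"])
  moreover have "(\<Sum>j<N. w t j) \<ge> (\<Sum>j<N. a j)" if "t \<ge> 0" for t
    using range that by (intro sum_mono) auto
  ultimately have sum_ge: "(\<Sum>j<N. lam t j) \<ge> (\<Sum>j<N. lam 0 j) + (\<Sum>j<N. a j) * t"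
    if "t \<ge> 0" for t
    using that by (rule ge_linear_if_deriv_ge)
  have "lam t i \<ge> - M + (\<Sum>j<N. lam 0 j) / real N + D * t" if "t \<ge> 0" for t
  proof -
    have "lam t i = deviation N (lam t) i + (\<Sum>j<N. lam t j) / real N"
      unfolding deviation_def by simp
    moreover have "(\<Sum>j<N. lam 0 j) / real N + D * t \<le> (\<Sum>j<N. lam t j) / real N"
      using divide_right_mono[OF sum_ge[OF that], of "real N"] unfolding D_def
      by (simp add: add_divide_distrib)
    ultimately show ?thesis
      using M[OF \<open>i < N\<close> that] by linarith
  qed
  moreover have "filterlim (\<lambda>t. - M + (\<Sum>j<N. lam 0 j) / real N + D * t) at_top at_top"
    using \<open>D > 0\<close>
    by (intro filterlim_tendsto_add_at_top[OF tendsto_const]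
        filterlim_tendsto_pos_mult_at_top[OF tendsto_const _ filterlim_ident])
  ultimately show ?thesis
    by (elim filterlim_at_top_mono) (auto intro: eventually_at_top_linorderI[of 0])
qed

lemma forced_consensus_at_top:
  fixes lam w :: "real \<Rightarrow> nat \<Rightarrow> real" and a b \<theta> :: "nat \<Rightarrow> real"
  assumes sym: "symp E"
    and conn: "\<And>i j. i < N \<Longrightarrow> j < N \<Longrightarrow> (\<lambda>a b. a < N \<and> b < N \<and> E a b)\<^sup>*\<^sup>* i j"
    and "k > 0"
    and ode: "\<And>i t. i < N \<Longrightarrow> t \<ge> 0 \<Longrightarrow>
      ((\<lambda>s. lam s i) has_real_derivative w t i + k * laplacian N E (lam t) i) (at t within {0..})"
    and range: "\<And>i t. i < N \<Longrightarrow> t \<ge> 0 \<Longrightarrow> a i \<le> w t i \<and> w t i \<le> b i"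
    and saturated: "\<And>i t. i < N \<Longrightarrow> t \<ge> 0 \<Longrightarrow> \<theta> i \<le> lam t i \<Longrightarrow> w t i = a i"
    and pos: "(\<Sum>i<N. a i) > 0"
    and "i < N"
  shows "filterlim (\<lambda>t. lam t i) at_top at_top"
    and "((\<lambda>t. w t i + k * laplacian N E (lam t) i) \<longlongrightarrow> (\<Sum>i<N. a i) / real N) at_top"
proof -
  have diverges: "filterlim (\<lambda>t. lam t j) at_top at_top" if "j < N" for j
    by (rule forced_consensus_diverges[where lam = lam and w = w and a = a and b = b,
          OF sym conn \<open>k > 0\<close> ode range pos that])
  then show "filterlim (\<lambda>t. lam t i) at_top at_top"
    using \<open>i < N\<close> .
  have "\<forall>\<^sub>F t in at_top. \<forall>j\<in>{..<N}. \<theta> j \<le> lam t j"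
    using diverges by (intro eventually_ball_finite) (auto simp: filterlim_at_top)
  then obtain T where "T \<ge> 0" and T: "\<And>t j. t \<ge> T \<Longrightarrow> j < N \<Longrightarrow> w t j = a j"
    using saturated unfolding eventually_at_top_linorder
    by (metis lessThan_iff linorder_linear order_trans)
  \<comment> \<open>Once every agent is saturated, the velocities \<open>u\<close> themselves follow the consensus flow.\<close>
  define u where "u t j = w t j + k * laplacian N E (lam t) j" for t j
  have lam_deriv: "((\<lambda>s. lam s j) has_real_derivative u t j) (at t)" if "t > T" "j < N" for t j
    using ode[OF that(2), of t] that \<open>T \<ge> 0\<close> unfolding u_def by (simp add: at_within_atLeast)
  have "((\<lambda>s. u s j - (\<Sum>i<N. a i) / real N) has_real_derivative
      k * laplacian N E (\<lambda>j. u t j - (\<Sum>i<N. a i) / real N) j) (at t)" if "t > T" "j < N" for t j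
  proof -
    have "((\<lambda>s. a j + k * laplacian N E (lam s) j - (\<Sum>i<N. a i) / real N) has_real_derivative
        k * laplacian N E (u t) j) (at t)"
      unfolding laplacian_def using lam_deriv that
      by (auto intro!: derivative_eq_intros DERIV_sum)
    then show ?thesis
      unfolding laplacian_diff_const
      by (rule has_field_derivative_transform_within_open[where S = "{T<..}"])
        (use that T in \<open>auto simp: u_def\<close>)
  qed
  moreover have "(\<Sum>j<N. u t j - (\<Sum>i<N. a i) / real N) = 0" if "t > T" for t
  proof -
    have "(\<Sum>j<N. u t j) = (\<Sum>i<N. a i)"
      unfolding u_def using T that
      by (simp add: sum.distrib sum_laplacian_eq_0[OF sym] flip: sum_distrib_left)
    moreover have "N > 0"
      using pos by (cases N) auto
    ultimately show ?thesis
      by (simp add: sum_subtractf)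
  qed
  ultimately have "((\<lambda>t. u t i - (\<Sum>i<N. a i) / real N) \<longlongrightarrow> 0) at_top"
    using \<open>i < N\<close> by (intro laplacian_flow_tendsto_zero[OF sym conn \<open>k > 0\<close>]) auto
  then show "((\<lambda>t. w t i + k * laplacian N E (lam t) i) \<longlongrightarrow> (\<Sum>i<N. a i) / real N) at_top"
    unfolding u_def by (simp add: LIM_zero_iff)
qed

lemma forced_consensus_at_bot:
  fixes lam w :: "real \<Rightarrow> nat \<Rightarrow> real" and a b \<theta> :: "nat \<Rightarrow> real"
  assumes sym: "symp E"
    and conn: "\<And>i j. i < N \<Longrightarrow> j < N \<Longrightarrow> (\<lambda>a b. a < N \<and> b < N \<and> E a b)\<^sup>*\<^sup>* i j"
    and "k > 0"
    and ode: "\<And>i t. i < N \<Longrightarrow> t \<ge> 0 \<Longrightarrow>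
      ((\<lambda>s. lam s i) has_real_derivative w t i + k * laplacian N E (lam t) i) (at t within {0..})"
    and range: "\<And>i t. i < N \<Longrightarrow> t \<ge> 0 \<Longrightarrow> a i \<le> w t i \<and> w t i \<le> b i"
    and saturated: "\<And>i t. i < N \<Longrightarrow> t \<ge> 0 \<Longrightarrow> lam t i \<le> \<theta> i \<Longrightarrow> w t i = b i"
    and neg: "(\<Sum>i<N. b i) < 0"
    and "i < N"
  shows "filterlim (\<lambda>t. lam t i) at_bot at_top"
    and "((\<lambda>t. w t i + k * laplacian N E (lam t) i) \<longlongrightarrow> (\<Sum>i<N. b i) / real N) at_top"
proof -
  \<comment> \<open>Reflect \<open>\<lambda> \<mapsto> -\<lambda>\<close>: the reflected system is forced from below by \<open>-b\<close>.\<close>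
  have ode': "((\<lambda>s. - lam s i) has_real_derivative - w t i + k * laplacian N E (\<lambda>j. - lam t j) i)
      (at t within {0..})" if "i < N" "t \<ge> 0" for i t
    using DERIV_minus[OF ode[OF that]] by (simp add: laplacian_uminus)
  have range': "- b i \<le> - w t i \<and> - w t i \<le> - a i" if "i < N" "t \<ge> 0" for i t
    using range[OF that] by simp
  have saturated': "- w t i = - b i" if "i < N" "t \<ge> 0" "- \<theta> i \<le> - lam t i" for i t
    using saturated that by simp
  have pos': "(\<Sum>i<N. - b i) > 0"
    using neg by (simp add: sum_negf)
  note reflected = forced_consensus_at_top[where lam = "\<lambda>t j. - lam t j" and w = "\<lambda>t j. - w t j"
      and a = "\<lambda>j. - b j" and b = "\<lambda>j. - a j" and \<theta> = "\<lambda>j. - \<theta> j",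
      OF sym conn \<open>k > 0\<close> ode' range' saturated' pos' \<open>i < N\<close>]
  show "filterlim (\<lambda>t. lam t i) at_bot at_top"
    using reflected(1) by (simp add: filterlim_uminus_at_bot)
  show "((\<lambda>t. w t i + k * laplacian N E (lam t) i) \<longlongrightarrow> (\<Sum>i<N. b i) / real N) at_top"
    using tendsto_minus[OF reflected(2)] by (simp add: laplacian_uminus sum_negf add.commute)
qed

section \<open>Convexity and the best response\<close>

lemma strict_convex_on_realD:
  assumes "strict_convex_on_real I f" "x \<in> I" "y \<in> I" "x \<noteq> y" "0 < t" "t < 1"
  shows "f (t * x + (1 - t) * y) < t * f x + (1 - t) * f y"
  using assms unfolding strict_convex_on_real_def by blast

lemma strict_convex_on_real_imp_convex_on:
  assumes "strict_convex_on_real I f" "convex I"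
  shows "convex_on I f"
proof (rule convex_onI[OF _ \<open>convex I\<close>])
  fix t x y :: real
  assume "0 < t" "t < 1" "x \<in> I" "y \<in> I"
  show "f ((1 - t) *\<^sub>R x + t *\<^sub>R y) \<le> (1 - t) * f x + t * f y"
  proof (cases "x = y")
    case True
    then show ?thesis
      by (simp add: algebra_simps)
  next
    case False
    then show ?thesis
      using strict_convex_on_realD[OF assms(1) \<open>x \<in> I\<close> \<open>y \<in> I\<close> False, of "1 - t"] \<open>0 < t\<close> \<open>t < 1\<close>
      by simp
  qed
qed

lemma convex_on_deriv_le_slope:
  fixes g :: "real \<Rightarrow> real"
  assumes "convex_on I g" "x \<in> I" "y \<in> I" "x < y" "(g has_real_derivative D) (at x)"
  shows "D \<le> (g y - g x) / (y - x)"
proof (rule tendsto_upperbound)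
  show "((\<lambda>h. (g (x + h) - g x) / h) \<longlongrightarrow> D) (at_right 0)"
    using assms(5) unfolding DERIV_def filterlim_at_split by simp
  show "\<forall>\<^sub>F h in at_right 0. (g (x + h) - g x) / h \<le> (g y - g x) / (y - x)"
    unfolding eventually_at_right_field
  proof (intro exI[of _ "y - x"] conjI allI impI)
    fix h :: real assume "0 < h" "h < y - x"
    then have "(g x - g (x + h)) / (x - (x + h)) \<le> (g x - g y) / (x - y)"
      using assms by (intro convex_on_slope_le(1)) auto
    moreover have "(g x - g (x + h)) / (x - (x + h)) = (g (x + h) - g x) / h"
      using minus_divide_divide[of "g (x + h) - g x" h] by simp
    moreover have "(g x - g y) / (x - y) = (g y - g x) / (y - x)"
      using minus_divide_divide[of "g y - g x" "y - x"] by simp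
    ultimately show "(g (x + h) - g x) / h \<le> (g y - g x) / (y - x)"
      by simp
  qed (use \<open>x < y\<close> in simp)
qed simp

lemma convex_on_slope_le_deriv:
  fixes g :: "real \<Rightarrow> real"
  assumes "convex_on I g" "x \<in> I" "y \<in> I" "x < y" "(g has_real_derivative D) (at y)"
  shows "(g y - g x) / (y - x) \<le> D"
proof (rule tendsto_lowerbound)
  show "((\<lambda>h. (g (y + h) - g y) / h) \<longlongrightarrow> D) (at_left 0)"
    using assms(5) unfolding DERIV_def filterlim_at_split by simp
  show "\<forall>\<^sub>F h in at_left 0. (g y - g x) / (y - x) \<le> (g (y + h) - g y) / h"
    unfolding eventually_at_left_field
  proof (intro exI[of _ "x - y"] conjI allI impI)
    fix h :: real assume "x - y < h" "h < 0"
    then have "(g x - g y) / (x - y) \<le> (g (y + h) - g y) / ((y + h) - y)"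
      using assms by (intro convex_on_slope_le(2)) auto
    moreover have "(g x - g y) / (x - y) = (g y - g x) / (y - x)"
      using minus_divide_divide[of "g y - g x" "y - x"] by simp
    ultimately show "(g y - g x) / (y - x) \<le> (g (y + h) - g y) / h"
      by simp
  qed (use \<open>x < y\<close> in simp)
qed simp

lemma strict_convex_on_real_deriv_strict_mono:
  fixes f f' :: "real \<Rightarrow> real"
  assumes sc: "strict_convex_on_real I f" and "convex I" "x \<in> I" "y \<in> I" "x < y"
    and "(f has_real_derivative f' x) (at x)" "(f has_real_derivative f' y) (at y)"
  shows "f' x < f' y"
proof -
  have cv: "convex_on I f"
    using strict_convex_on_real_imp_convex_on[OF sc \<open>convex I\<close>] .
  define m where "m = (1 / 2) * x + (1 - 1 / 2) * y"
  have "m \<in> I"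
    unfolding m_def using convexD[OF \<open>convex I\<close> \<open>x \<in> I\<close> \<open>y \<in> I\<close>, of "1 / 2" "1 / 2"] by simp
  have "x < m" "m < y" and half: "m - x = (y - x) / 2" "y - m = (y - x) / 2"
    unfolding m_def using \<open>x < y\<close> by (auto simp: field_simps)
  \<comment> \<open>Strict convexity at the midpoint separates the two chord slopes.\<close>
  have "2 * f m < f x + f y"
    using strict_convex_on_realD[OF sc \<open>x \<in> I\<close> \<open>y \<in> I\<close>, of "1 / 2"] \<open>x < y\<close>
    unfolding m_def by simp
  then have "(f m - f x) / (m - x) < (f y - f m) / (y - m)"
    unfolding half using \<open>x < y\<close> by (intro divide_strict_right_mono) auto
  moreover have "f' x \<le> (f m - f x) / (m - x)"
    using assms \<open>m \<in> I\<close> \<open>x < m\<close> by (intro convex_on_deriv_le_slope[OF cv]) auto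
  moreover have "(f y - f m) / (y - m) \<le> f' y"
    using assms \<open>m \<in> I\<close> \<open>m < y\<close> by (intro convex_on_slope_le_deriv[OF cv]) auto
  ultimately show ?thesis
    by linarith
qed

lemma convex_on_deriv_mono:
  fixes g g' :: "real \<Rightarrow> real"
  assumes "convex_on I g" "x \<in> I" "y \<in> I" "x \<le> y"
    and "(g has_real_derivative g' x) (at x)" "(g has_real_derivative g' y) (at y)"
  shows "g' x \<le> g' y"
proof (cases "x = y")
  case False
  then have "x < y"
    using \<open>x \<le> y\<close> by simp
  then show ?thesis
    using convex_on_deriv_le_slope[OF assms(1-3) \<open>x < y\<close> assms(5)]
      convex_on_slope_le_deriv[OF assms(1-3) \<open>x < y\<close> assms(6)]
    by linarith
qed simp

lemma strict_mono_on_marginal_ratio: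
  fixes f \<phi> f' \<phi>' :: "real \<Rightarrow> real"
  assumes sc: "strict_convex_on_real I f" and cv: "convex_on I \<phi>"
    and f_deriv: "\<And>x. x \<in> I \<Longrightarrow> (f has_real_derivative f' x) (at x)"
    and \<phi>_deriv: "\<And>x. x \<in> I \<Longrightarrow> (\<phi> has_real_derivative \<phi>' x) (at x)"
    and f'_pos: "\<And>x. x \<in> I \<Longrightarrow> f' x > 0"
    and \<phi>'_lt_1: "\<And>x. x \<in> I \<Longrightarrow> \<phi>' x < 1"
  shows "strict_mono_on I (\<lambda>x. f' x / (1 - \<phi>' x))"
proof (rule strict_mono_onI)
  fix x y assume "x \<in> I" "y \<in> I" "x < y"
  have "f' x / (1 - \<phi>' x) \<le> f' x / (1 - \<phi>' y)"
    using convex_on_deriv_mono[OF cv \<open>x \<in> I\<close> \<open>y \<in> I\<close>] \<phi>_deriv f'_pos \<phi>'_lt_1 \<open>x \<in> I\<close> \<open>y \<in> I\<close> \<open>x < y\<close>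
    by (intro divide_left_mono) (auto simp: less_imp_le)
  also have "\<dots> < f' y / (1 - \<phi>' y)"
    using strict_convex_on_real_deriv_strict_mono[OF sc convex_on_imp_convex[OF cv]]
      f_deriv \<phi>'_lt_1 \<open>x \<in> I\<close> \<open>y \<in> I\<close> \<open>x < y\<close>
    by (intro divide_strict_right_mono) auto
  finally show "f' x / (1 - \<phi>' x) < f' y / (1 - \<phi>' y)" .
qed

lemma mono_on_minus_if_deriv_le_1:
  fixes \<phi> \<phi>' :: "real \<Rightarrow> real"
  assumes "\<And>x. x \<in> {a..b} \<Longrightarrow> (\<phi> has_real_derivative \<phi>' x) (at x)"
    and "\<And>x. x \<in> {a..b} \<Longrightarrow> \<phi>' x \<le> 1"
  shows "mono_on {a..b} (\<lambda>x. x - \<phi> x)"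
proof (rule mono_onI)
  fix x y assume "x \<in> {a..b}" "y \<in> {a..b}" "x \<le> y"
  show "x - \<phi> x \<le> y - \<phi> y"
  proof (rule DERIV_nonneg_imp_nondecreasing[OF \<open>x \<le> y\<close>])
    fix z assume "x \<le> z" "z \<le> y"
    then have "z \<in> {a..b}"
      using \<open>x \<in> {a..b}\<close> \<open>y \<in> {a..b}\<close> by auto
    then have "((\<lambda>s. s - \<phi> s) has_real_derivative 1 - \<phi>' z) (at z)" "1 - \<phi>' z \<ge> 0"
      using assms by (auto intro: DERIV_diff DERIV_ident)
    then show "\<exists>y. ((\<lambda>s. s - \<phi> s) has_real_derivative y) (at z) \<and> 0 \<le> y"
      by blast
  qed
qed

lemma xhat_mem:
  assumes "lo \<le> hi" "continuous_on {lo..hi} v" "strict_mono_on {lo..hi} v"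
  shows "xhat lo hi v l \<in> {lo..hi}"
proof (cases "v lo < l \<and> l < v hi")
  case True
  then obtain x where x: "x \<in> {lo..hi}" "v x = l"
    using IVT'[of v lo l hi] assms by (auto simp: less_imp_le)
  have "(THE x. lo \<le> x \<and> x \<le> hi \<and> v x = l) = x"
  proof (rule the_equality)
    show "lo \<le> x \<and> x \<le> hi \<and> v x = l"
      using x by auto
    fix y assume "lo \<le> y \<and> y \<le> hi \<and> v y = l"
    then show "y = x"
      using inj_onD[OF strict_mono_on_imp_inj_on[OF assms(3)], of y x] x by auto
  qed
  then show ?thesis
    using True x unfolding xhat_def by auto
qed (use assms in \<open>auto simp: xhat_def\<close>)

lemma xhat_eq_hi:
  assumes "lo \<le> hi" "strict_mono_on {lo..hi} v" "v hi \<le> l"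
  shows "xhat lo hi v l = hi"
proof (cases "l \<le> v lo")
  case True
  then have "lo = hi"
    using strict_mono_onD[OF assms(2), of lo hi] assms by force
  then show ?thesis
    unfolding xhat_def by simp
qed (use assms in \<open>simp add: xhat_def\<close>)

lemma xhat_response_bounds:
  fixes f \<phi> f' \<phi>' :: "real \<Rightarrow> real"
  assumes "lo \<le> hi"
    and f_deriv: "\<And>x. (f has_real_derivative f' x) (at x)"
    and \<phi>_deriv: "\<And>x. (\<phi> has_real_derivative \<phi>' x) (at x)"
    and "continuous_on UNIV f'" "continuous_on UNIV \<phi>'"
    and sc: "strict_convex_on_real {lo..hi} f" and cv: "convex_on {lo..hi} \<phi>"
    and \<phi>'_lt_1: "\<And>x. x \<in> {lo..hi} \<Longrightarrow> \<phi>' x < 1"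
    and f'_pos: "\<And>x. x \<in> {lo..hi} \<Longrightarrow> f' x > 0"
  defines "v \<equiv> \<lambda>x. f' x / (1 - \<phi>' x)"
  shows "lo - \<phi> lo \<le> xhat lo hi v l - \<phi> (xhat lo hi v l)"
    and "xhat lo hi v l - \<phi> (xhat lo hi v l) \<le> hi - \<phi> hi"
    and "v hi \<le> l \<Longrightarrow> xhat lo hi v l = hi"
proof -
  have mono: "strict_mono_on {lo..hi} v"
    unfolding v_def using f_deriv \<phi>_deriv f'_pos \<phi>'_lt_1
    by (intro strict_mono_on_marginal_ratio[OF sc cv])
  have "continuous_on {lo..hi} f'" "continuous_on {lo..hi} \<phi>'"
    using assms(4,5) by (auto intro: continuous_on_subset[OF _ subset_UNIV])
  moreover have "\<forall>x\<in>{lo..hi}. 1 - \<phi>' x \<noteq> 0"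
    using \<phi>'_lt_1 by fastforce
  ultimately have "continuous_on {lo..hi} v"
    unfolding v_def by (intro continuous_on_divide continuous_on_diff continuous_on_const)
  then have "xhat lo hi v l \<in> {lo..hi}"
    using \<open>lo \<le> hi\<close> mono by (intro xhat_mem)
  moreover have "mono_on {lo..hi} (\<lambda>x. x - \<phi> x)"
    using \<phi>_deriv \<phi>'_lt_1 by (intro mono_on_minus_if_deriv_le_1) (auto simp: less_imp_le)
  ultimately show "lo - \<phi> lo \<le> xhat lo hi v l - \<phi> (xhat lo hi v l)"
    and "xhat lo hi v l - \<phi> (xhat lo hi v l) \<le> hi - \<phi> hi"
    using \<open>lo \<le> hi\<close> by (auto intro: mono_onD)
  show "v hi \<le> l \<Longrightarrow> xhat lo hi v l = hi"
    using xhat_eq_hi[OF \<open>lo \<le> hi\<close> mono] .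
qed

theorem theorem4:
  fixes N :: nat
    and d lo hi :: "nat \<Rightarrow> real"
    and f \<phi> f' \<phi>' :: "nat \<Rightarrow> real \<Rightarrow> real"
    and E :: "nat \<Rightarrow> nat \<Rightarrow> bool"
    and k :: real
    and lam :: "real \<Rightarrow> nat \<Rightarrow> real"
  defines "v \<equiv> (\<lambda>i x. f' i x / (1 - \<phi>' i x))"
  defines "rhs \<equiv> (\<lambda>t i. d i - xhat (lo i) (hi i) (v i) (lam t i)
                     + \<phi> i (xhat (lo i) (hi i) (v i) (lam t i))
                     + k * (\<Sum>j\<in>{j. j < N \<and> E j i}. lam t j - lam t i))"
  assumes interval: "\<forall>i<N. lo i \<le> hi i"
    and A1_f_deriv: "\<forall>i<N. \<forall>x. (f i has_real_derivative f' i x) (at x)"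
    and A1_phi_deriv: "\<forall>i<N. \<forall>x. (\<phi> i has_real_derivative \<phi>' i x) (at x)"
    and A1_f_C1: "\<forall>i<N. continuous_on UNIV (f' i)"
    and A1_phi_C1: "\<forall>i<N. continuous_on UNIV (\<phi>' i)"
    and A1_f_sconv: "\<forall>i<N. strict_convex_on_real {lo i..hi i} (f i)"
    and A1_phi_conv: "\<forall>i<N. convex_on {lo i..hi i} (\<phi> i)"
    and A1_phi_slope: "\<forall>i<N. \<forall>x\<in>{lo i..hi i}. \<phi>' i x < 1"
    and A2: "\<forall>i<N. \<forall>x\<in>{lo i..hi i}. f' i x > 0"
    and A3_sym: "\<forall>i j. E i j \<longrightarrow> E j i"
    and A3_conn: "\<forall>i<N. \<forall>j<N. (\<lambda>a b. a < N \<and> b < N \<and> E a b)\<^sup>*\<^sup>* i j"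
    and k_pos: "k > 0"
    and ode: "\<forall>i<N. \<forall>t\<ge>0. ((\<lambda>s. lam s i) has_real_derivative rhs t i) (at t within {0..})"
  shows
    "((\<Sum>i<N. d i - hi i + \<phi> i (hi i)) > 0 \<longrightarrow>
        (\<forall>i<N. filterlim (\<lambda>t. lam t i) at_top at_top \<and>
               ((\<lambda>t. rhs t i) \<longlongrightarrow> (\<Sum>i<N. d i - hi i + \<phi> i (hi i)) / real N) at_top))
     \<and> ((\<Sum>i<N. d i - lo i + \<phi> i (lo i)) < 0 \<longrightarrow>
        (\<forall>i<N. filterlim (\<lambda>t. lam t i) at_bot at_top \<and>
               ((\<lambda>t. rhs t i) \<longlongrightarrow> (\<Sum>i<N. d i - lo i + \<phi> i (lo i)) / real N) at_top))"
proof -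
  define x where "x t i = xhat (lo i) (hi i) (v i) (lam t i)" for t i
  define w where "w t i = d i - x t i + \<phi> i (x t i)" for t i
  define a where "a = (\<lambda>i. d i - hi i + \<phi> i (hi i))"
  define b where "b = (\<lambda>i. d i - lo i + \<phi> i (lo i))"
  have rhs_eq: "rhs t i = w t i + k * laplacian N E (lam t) i" for t i
    unfolding rhs_def w_def x_def laplacian_def by simp
  have response: "lo i - \<phi> i (lo i) \<le> x t i - \<phi> i (x t i)" "x t i - \<phi> i (x t i) \<le> hi i - \<phi> i (hi i)"
    "v i (hi i) \<le> lam t i \<Longrightarrow> x t i = hi i" if "i < N" for i t
    using xhat_response_bounds[of "lo i" "hi i" "f i" "f' i" "\<phi> i" "\<phi>' i" "lam t i",
        OF interval[rule_format, OF that] A1_f_deriv[rule_format, OF that]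
        A1_phi_deriv[rule_format, OF that] A1_f_C1[rule_format, OF that]
        A1_phi_C1[rule_format, OF that] A1_f_sconv[rule_format, OF that]
        A1_phi_conv[rule_format, OF that] A1_phi_slope[rule_format, OF that] A2[rule_format, OF that]]
    unfolding x_def v_def by simp_all
  have range: "a i \<le> w t i \<and> w t i \<le> b i" if "i < N" for i t
    unfolding a_def b_def w_def using response(1,2)[OF that, of t] by linarith
  have saturated_hi: "w t i = a i" if "i < N" "v i (hi i) \<le> lam t i" for i t
    unfolding a_def w_def using response(3)[OF that] by simp
  have saturated_lo: "w t i = b i" if "lam t i \<le> v i (lo i)" for i t
    unfolding b_def w_def x_def xhat_def using that by simp
  have sym: "symp E"
    using A3_sym by (auto intro: sympI)
  have ode': "((\<lambda>s. lam s i) has_real_derivative w t i + k * laplacian N E (lam t) i)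
      (at t within {0..})" if "i < N" "t \<ge> 0" for i t
    using ode that unfolding rhs_eq by blast
  note forced = sym A3_conn[rule_format] k_pos ode'
  show ?thesis
    unfolding rhs_eq a_def[symmetric] b_def[symmetric]
    using forced_consensus_at_top[where a = a and b = b and \<theta> = "\<lambda>i. v i (hi i)", OF forced]
      forced_consensus_at_bot[where a = a and b = b and \<theta> = "\<lambda>i. v i (lo i)", OF forced]
      range saturated_hi saturated_lo
    by blast
qed

end
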